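(* In the three-agent investor/hedge-fund setting with restricted reports, fix the investor's report $\tilde m$. Then the unique Nash equilibrium between the two hedge funds (each choosing its report to maximize its own utility given the other's report) is $$M'_{12}=M'_{13}=\frac{c}{1-s}=\frac{a\nu-\tilde m(1-\nu)(\nu-\eta)}{\nu+(1-\nu)(\nu-\eta)},$$ where $c=\frac{a\nu-\tilde\alpha(1-\nu)}{\nu(2-\nu)}$, $s=\frac{\eta(1-\nu)}{\nu(2-\nu)}$ and $\tilde\alpha=\tilde m/(2+\rho)$.
   Context: Three agents: agent 1 (investor), agents 2 and 3 (hedge funds). Parameters $m,a\in\mathbb{R}$ and $\rho\in(-1,1)$; true beliefs $M=\begin{pmatrix}0&a&a\\ m&0&0\\ m&0&0\end{pmatrix}$ (column $i$ is agent $i$'s true belief vector $\mu_i$), $\Sigma=\begin{pmatrix}1&0&0\\0&1&\rho\\0&\rho&1\end{pmatrix}$, $\Gamma=I_3$. Restricted reports: the investor reports a common value $\tilde m$ for $M'_{21}=M'_{31}$, fund 2 reports $M'_{12}=\tilde a$, fund 3 reports $M'_{13}=\tilde b$, and all other entries of $M'$ equal the true value $0$. The stable point for $M'$ is the unique $(W,P)$ with $W=W^T$, $P^T=-P$ and $M'-P=2\Sigma W\Gamma$. Agent $i$'s utility is $g_i=w_i^T(\mu_i-Pe_i)-w_i^T\Sigma w_i$, $w_i=We_i$. Define $\nu=\tfrac12\big(\tfrac1{2-\rho}+\tfrac1{2+\rho}\big)$ and $\eta=\tfrac12\big(\tfrac1{2-\rho}-\tfrac1{2+\rho}\big)$. 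*)

theory Defs
  imports "HOL-Analysis.Analysis"
begin

text \<open>Matrices are real^3^3; A $ i $ j is row i, column j; agents are indices 1,2,3.
  Column i of a belief matrix is agent i's belief vector.\<close>

definition SigmaM :: "real \<Rightarrow> real^3^3" where
  "SigmaM \<rho> = vector [vector [1, 0, 0], vector [0, 1, \<rho>], vector [0, \<rho>, 1]]"

definition GammaM :: "real^3^3" where
  "GammaM = mat 1"

definition Mtrue :: "real \<Rightarrow> real \<Rightarrow> real^3^3" where
  "Mtrue m a = vector [vector [0, a, a], vector [m, 0, 0], vector [m, 0, 0]]"

text \<open>Restricted reported matrix M': investor reports mt for entries (2,1),(3,1);
  fund 2 reports r2 for entry (1,2); fund 3 reports r3 for entry (1,3); rest true (0).\<close>
definition Mrep :: "real \<Rightarrow> real \<Rightarrow> real \<Rightarrow> real^3^3" where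
  "Mrep mt r2 r3 = vector [vector [0, r2, r3], vector [mt, 0, 0], vector [mt, 0, 0]]"

definition is_stable :: "real^3^3 \<Rightarrow> real^3^3 \<Rightarrow> real^3^3 \<Rightarrow> real^3^3 \<Rightarrow> real^3^3 \<Rightarrow> bool" where
  "is_stable Sig Gam M' W P \<longleftrightarrow>
     transpose W = W \<and> transpose P = - P \<and> M' - P = 2 *\<^sub>R (Sig ** W ** Gam)"

definition stable_point :: "real \<Rightarrow> real^3^3 \<Rightarrow> (real^3^3) \<times> (real^3^3)" where
  "stable_point \<rho> M' = (THE (W, P). is_stable (SigmaM \<rho>) GammaM M' W P)"

definition util :: "real \<Rightarrow> real^3^3 \<Rightarrow> real^3^3 \<Rightarrow> 3 \<Rightarrow> real" where
  "util \<rho> M M' i =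
     (let (W, P) = stable_point \<rho> M';
          w = W *v axis i 1;
          \<mu> = M *v axis i 1
      in w \<bullet> (\<mu> - P *v axis i 1) - w \<bullet> (SigmaM \<rho> *v w))"

definition is_funds_NE :: "real \<Rightarrow> real \<Rightarrow> real \<Rightarrow> real \<Rightarrow> real \<Rightarrow> real \<Rightarrow> bool" where
  "is_funds_NE m a \<rho> mt r2 r3 \<longleftrightarrow>
     (\<forall>x. util \<rho> (Mtrue m a) (Mrep mt x r3) 2 \<le> util \<rho> (Mtrue m a) (Mrep mt r2 r3) 2) \<and>
     (\<forall>y. util \<rho> (Mtrue m a) (Mrep mt r2 y) 3 \<le> util \<rho> (Mtrue m a) (Mrep mt r2 r3) 3)"

definition nuC :: "real \<Rightarrow> real" where
  "nuC \<rho> = (1/(2 - \<rho>) + 1/(2 + \<rho>)) / 2"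

definition etaC :: "real \<Rightarrow> real" where
  "etaC \<rho> = (1/(2 - \<rho>) - 1/(2 + \<rho>)) / 2"

end

theory Submission
  imports Defs
begin

(* For the restricted reports the stable point is explicit, and it is the only one: the difference
   D of two stable weight matrices is symmetric with Sigma D + D Sigma = 0, which forces D = 0 since
   Sigma is positive definite. At the stable point a fund's utility is a concave quadratic in its
   position, and the position is an affine bijective function of the fund's own report. So each fund
   has a unique best response, affine in the other fund's report with a slope s of modulus less
   than 1, and the equilibria are the solutions of r2 = c + s r3, r3 = c + s r2: the single point
   r2 = r3 = c / (1 - s). The paper's c and s are these coefficients written in terms of nu, eta. *)

lemma diag_sandwich_symmetric:
  fixes D S :: "real^'n^'n"
  assumes "transpose D = D"
  shows "(D ** (S ** D)) $ i $ i = column i D \<bullet> (S *v column i D)"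
proof -
  have sym: "D $ i $ j = D $ j $ i" for j
    using assms by (metis transpose_def vec_lambda_beta)
  show ?thesis
    by (simp add: matrix_matrix_mult_def matrix_vector_mult_def inner_vec_def column_def sym
        sum_distrib_left mult.commute mult.left_commute)
qed

lemma lyapunov_homogeneous_symmetric_eq_0:
  fixes D S :: "real^'n^'n"
  assumes pos: "\<And>x. x \<noteq> 0 \<Longrightarrow> x \<bullet> (S *v x) > 0"
    and sym: "transpose D = D" and anti: "S ** D + D ** S = 0"
  shows "D = 0"
proof -
  \<comment> \<open>tr (D S D) is a sum of nonnegative forms, and equals its own negative by anticommutation
    and cyclicity of the trace.\<close>
  have "trace (D ** (S ** D)) + trace (D ** (D ** S)) = 0"
    using anti by (metis matrix_add_ldistrib times0_right trace_add trace_0 mat_0)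
  moreover have "trace (D ** (D ** S)) = trace (D ** (S ** D))"
    by (metis matrix_mul_assoc trace_mul_sym)
  ultimately have "(\<Sum>i\<in>UNIV. column i D \<bullet> (S *v column i D)) = 0"
    by (simp add: trace_def diag_sandwich_symmetric[OF sym])
  moreover have "column i D \<bullet> (S *v column i D) \<ge> 0" for i
    using pos[of "column i D"] by (cases "column i D = 0") auto
  ultimately have "column i D \<bullet> (S *v column i D) = 0" for i
    by (simp add: sum_nonneg_eq_0_iff)
  hence "column i D = 0" for i
    using pos by force
  thus "D = 0" by (simp add: vec_eq_iff column_def)
qed

lemma transpose_diff: "transpose (A - B) = transpose A - transpose (B :: 'a::ab_group_add^'n^'m)"
  by (simp add: transpose_def vec_eq_iff)

lemma is_stable_unique:
  assumes pos: "\<And>x. x \<noteq> 0 \<Longrightarrow> x \<bullet> (S *v x) > 0" and "transpose S = S"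
    and st: "is_stable S (mat 1) M W P" and st': "is_stable S (mat 1) M W' P'"
  shows "W' = W \<and> P' = P"
proof -
  define E where "E = W' - W"
  have eq: "M - P = 2 *\<^sub>R (S ** W)" "M - P' = 2 *\<^sub>R (S ** W')"
    and sym: "transpose W = W" "transpose W' = W'"
    and skew: "transpose P = - P" "transpose P' = - P'"
    using st st' by (auto simp: is_stable_def)
  have "S ** W' = S ** W + S ** E"
    by (simp add: E_def flip: matrix_add_ldistrib)
  hence PE: "P - P' = 2 *\<^sub>R (S ** E)"
    using eq by (simp add: algebra_simps)
  have "transpose (S ** E) = E ** S"
    using sym \<open>transpose S = S\<close> by (simp add: matrix_transpose_mul E_def transpose_diff)
  hence "2 *\<^sub>R (S ** E + E ** S) = (P - P') + transpose (P - P')"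
    by (simp add: PE transpose_scalar scaleR_add_right)
  also have "\<dots> = 0"
    using skew by (simp add: transpose_diff)
  finally have "S ** E + E ** S = 0"
    by simp
  moreover have "transpose E = E"
    using sym by (simp add: E_def transpose_diff)
  ultimately have "E = 0"
    using lyapunov_homogeneous_symmetric_eq_0 pos by blast
  thus ?thesis
    using PE by (simp add: E_def)
qed

lemma SigmaM_pos_def:
  assumes "\<rho>\<^sup>2 < 1" and "x \<noteq> 0"
  shows "x \<bullet> (SigmaM \<rho> *v x) > 0"
proof -
  have "x \<bullet> (SigmaM \<rho> *v x) = (x$1)\<^sup>2 + (1 - \<rho>\<^sup>2) * (x$2)\<^sup>2 + (\<rho> * x$2 + x$3)\<^sup>2"
    by (simp add: SigmaM_def inner_vec_def matrix_vector_mult_def sum_3 power2_eq_square algebra_simps)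
  moreover have "x$1 \<noteq> 0 \<or> x$2 \<noteq> 0 \<or> x$3 \<noteq> 0"
    using assms(2) by (auto simp: vec_eq_iff forall_3)
  moreover have "(x$1)\<^sup>2 + (1 - \<rho>\<^sup>2) * (x$2)\<^sup>2 + (\<rho> * x$2 + x$3)\<^sup>2 > 0"
  proof (cases "x$2 = 0")
    case True
    with \<open>x$1 \<noteq> 0 \<or> x$2 \<noteq> 0 \<or> x$3 \<noteq> 0\<close> show ?thesis
      by (simp add: sum_power2_gt_zero_iff)
  next
    case False
    with assms(1) have "(1 - \<rho>\<^sup>2) * (x$2)\<^sup>2 > 0" by simp
    thus ?thesis by (simp add: add_nonneg_pos add_pos_nonneg)
  qed
  ultimately show ?thesis by simp
qed

lemma transpose_SigmaM: "transpose (SigmaM \<rho>) = SigmaM \<rho>"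
  by (simp add: SigmaM_def transpose_def vec_eq_iff forall_3)

lemma stable_point_eqI:
  assumes "\<rho>\<^sup>2 < 1" and "is_stable (SigmaM \<rho>) GammaM M' W P"
  shows "stable_point \<rho> M' = (W, P)"
  unfolding stable_point_def
proof (rule the_equality)
  show "case (W, P) of (W, P) \<Rightarrow> is_stable (SigmaM \<rho>) GammaM M' W P"
    using assms(2) by simp
next
  fix WP assume "case WP of (W', P') \<Rightarrow> is_stable (SigmaM \<rho>) GammaM M' W' P'"
  thus "WP = (W, P)"
    using is_stable_unique[OF SigmaM_pos_def[OF assms(1)] transpose_SigmaM assms(2)[unfolded GammaM_def]]
    by (cases WP) (auto simp: GammaM_def)
qed

text \<open>The holding \<open>W $ 1 $ i\<close> of fund \<open>i\<close> at the stable point, when it reports \<open>r\<close> and the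
  other fund reports \<open>s\<close>.\<close>

definition fund_position :: "real \<Rightarrow> real \<Rightarrow> real \<Rightarrow> real \<Rightarrow> real" where
  "fund_position \<rho> mt r s = (2 * (mt + r) - \<rho> * (mt + s)) / (2 * (4 - \<rho>\<^sup>2))"

lemma fund_position_balance:
  assumes "\<rho>\<^sup>2 < 1"
  shows "4 * fund_position \<rho> mt r s + 2 * \<rho> * fund_position \<rho> mt s r = mt + r"
proof -
  have "4 - \<rho>\<^sup>2 \<noteq> 0" using assms by simp
  thus ?thesis by (simp add: fund_position_def divide_simps) (simp add: algebra_simps power2_eq_square)
qed

definition stable_weights :: "real \<Rightarrow> real \<Rightarrow> real \<Rightarrow> real \<Rightarrow> real^3^3" where
  "stable_weights \<rho> mt r2 r3 =
     (let w2 = fund_position \<rho> mt r2 r3; w3 = fund_position \<rho> mt r3 r2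
      in vector [vector [0, w2, w3], vector [w2, 0, 0], vector [w3, 0, 0]])"

definition stable_prices :: "real \<Rightarrow> real \<Rightarrow> real \<Rightarrow> real \<Rightarrow> real^3^3" where
  "stable_prices \<rho> mt r2 r3 =
     (let p2 = r2 - 2 * fund_position \<rho> mt r2 r3; p3 = r3 - 2 * fund_position \<rho> mt r3 r2
      in vector [vector [0, p2, p3], vector [- p2, 0, 0], vector [- p3, 0, 0]])"

lemma is_stable_Mrep:
  assumes "\<rho>\<^sup>2 < 1"
  shows "is_stable (SigmaM \<rho>) GammaM (Mrep mt r2 r3) (stable_weights \<rho> mt r2 r3) (stable_prices \<rho> mt r2 r3)"
  using fund_position_balance[OF assms, of mt r2 r3] fund_position_balance[OF assms, of mt r3 r2]
  unfolding is_stable_def GammaM_def matrix_mul_rid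
  by (simp add: SigmaM_def Mrep_def stable_weights_def stable_prices_def
      vec_eq_iff forall_3 matrix_matrix_mult_def sum_3 transpose_def Let_def algebra_simps)

definition fund_utility :: "real \<Rightarrow> real \<Rightarrow> real \<Rightarrow> real \<Rightarrow> real \<Rightarrow> real" where
  "fund_utility \<rho> a mt r s = fund_position \<rho> mt r s * (a - r) + (fund_position \<rho> mt r s)\<^sup>2"

lemma util_fund2:
  assumes "\<rho>\<^sup>2 < 1"
  shows "util \<rho> (Mtrue m a) (Mrep mt r2 r3) 2 = fund_utility \<rho> a mt r2 r3"
  unfolding util_def stable_point_eqI[OF assms is_stable_Mrep[OF assms]]
  by (simp add: stable_weights_def stable_prices_def Mtrue_def SigmaM_def fund_utility_def Let_def
      matrix_vector_mult_def sum_3 inner_vec_def axis_def power2_eq_square algebra_simps)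

lemma util_fund3:
  assumes "\<rho>\<^sup>2 < 1"
  shows "util \<rho> (Mtrue m a) (Mrep mt r2 r3) 3 = fund_utility \<rho> a mt r3 r2"
  unfolding util_def stable_point_eqI[OF assms is_stable_Mrep[OF assms]]
  by (simp add: stable_weights_def stable_prices_def Mtrue_def SigmaM_def fund_utility_def Let_def
      matrix_vector_mult_def sum_3 inner_vec_def axis_def power2_eq_square algebra_simps)

lemma concave_quadratic_max_iff:
  fixes A B v :: "'a::linordered_field"
  assumes "A > 0"
  shows "(\<forall>u. B * u - A * u\<^sup>2 \<le> B * v - A * v\<^sup>2) \<longleftrightarrow> v = B / (2 * A)"
proof -
  have gap: "B * v - A * v\<^sup>2 - (B * u - A * u\<^sup>2) = A * ((u - B / (2 * A))\<^sup>2 - (v - B / (2 * A))\<^sup>2)" for u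
    using assms by (simp add: field_simps power2_eq_square)
  show ?thesis
  proof
    assume "\<forall>u. B * u - A * u\<^sup>2 \<le> B * v - A * v\<^sup>2"
    hence "0 \<le> B * v - A * v\<^sup>2 - (B * (B / (2 * A)) - A * (B / (2 * A))\<^sup>2)"
      by (simp only: diff_ge_0_iff_ge)
    hence "A * (v - B / (2 * A))\<^sup>2 \<le> 0"
      unfolding gap by simp
    with assms show "v = B / (2 * A)"
      by (simp add: mult_le_0_iff)
  next
    assume v: "v = B / (2 * A)"
    show "\<forall>u. B * u - A * u\<^sup>2 \<le> B * v - A * v\<^sup>2"
    proof
      fix u
      have "0 \<le> A * (u - v)\<^sup>2"
        using assms by simp
      thus "B * u - A * u\<^sup>2 \<le> B * v - A * v\<^sup>2"
        using gap[of u] by (simp add: v)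
    qed
  qed
qed

definition best_response_slope :: "real \<Rightarrow> real" where
  "best_response_slope \<rho> = \<rho> * (2 - \<rho>\<^sup>2) / (4 * (3 - \<rho>\<^sup>2))"

definition best_response_offset :: "real \<Rightarrow> real \<Rightarrow> real \<Rightarrow> real" where
  "best_response_offset \<rho> a mt = (2 * a * (4 - \<rho>\<^sup>2) - (2 - \<rho>) * (2 - \<rho>\<^sup>2) * mt) / (4 * (3 - \<rho>\<^sup>2))"

lemma fund_best_response_iff:
  assumes "\<rho>\<^sup>2 < 1"
  shows "(\<forall>x. fund_utility \<rho> a mt x s \<le> fund_utility \<rho> a mt r s) \<longleftrightarrow>
         r = best_response_offset \<rho> a mt + best_response_slope \<rho> * s"
proof -
  \<comment> \<open>Maximise over positions instead of reports: \<open>report\<close> inverts the affine map \<open>w\<close>.\<close>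
  define w where "w x = fund_position \<rho> mt x s" for x
  define report where "report u = (4 - \<rho>\<^sup>2) * u - mt + \<rho> * (mt + s) / 2" for u
  define A where "A = 3 - \<rho>\<^sup>2"
  define B where "B = a + mt - \<rho> * (mt + s) / 2"
  have "4 - \<rho>\<^sup>2 \<noteq> 0" and A: "A > 0"
    using assms by (auto simp: A_def)
  hence w_report: "w (report u) = u" and report_w: "report (w x) = x" for u x
    unfolding w_def report_def fund_position_def by (simp_all add: field_simps)
  have utility: "fund_utility \<rho> a mt x s = B * w x - A * (w x)\<^sup>2" for x
  proof -
    have "fund_utility \<rho> a mt x s = w x * (a - report (w x)) + (w x)\<^sup>2"
      unfolding report_w by (simp add: fund_utility_def w_def)
    thus ?thesis
      by (simp add: report_def A_def B_def power2_eq_square algebra_simps)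
  qed
  have "(\<forall>x. fund_utility \<rho> a mt x s \<le> fund_utility \<rho> a mt r s) \<longleftrightarrow>
        (\<forall>u. B * u - A * u\<^sup>2 \<le> B * w r - A * (w r)\<^sup>2)"
    unfolding utility
  proof (intro iffI allI)
    fix u
    assume "\<forall>x. B * w x - A * (w x)\<^sup>2 \<le> B * w r - A * (w r)\<^sup>2"
    from this[rule_format, of "report u"]
    show "B * u - A * u\<^sup>2 \<le> B * w r - A * (w r)\<^sup>2"
      by (simp only: w_report)
  qed simp
  also have "\<dots> \<longleftrightarrow> w r = B / (2 * A)"
    by (rule concave_quadratic_max_iff[OF A])
  also have "\<dots> \<longleftrightarrow> r = report (B / (2 * A))"
    by (metis report_w w_report)
  also have "report (B / (2 * A)) = best_response_offset \<rho> a mt + best_response_slope \<rho> * s"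
  proof -
    have "3 - \<rho>\<^sup>2 \<noteq> 0"
      using assms by simp
    hence "report (B / (2 * A)) = (2 * a * (4 - \<rho>\<^sup>2) - (2 - \<rho>) * (2 - \<rho>\<^sup>2) * mt
        + \<rho> * (2 - \<rho>\<^sup>2) * s) / (4 * (3 - \<rho>\<^sup>2))"
      unfolding report_def A_def B_def
      by (simp add: divide_simps) (simp add: power2_eq_square algebra_simps)
    thus ?thesis
      unfolding best_response_offset_def best_response_slope_def
      by (simp only: add_divide_distrib times_divide_eq_left)
  qed
  finally show ?thesis .
qed

lemma is_funds_NE_iff:
  assumes "\<rho>\<^sup>2 < 1"
  shows "is_funds_NE m a \<rho> mt r2 r3 \<longleftrightarrow>
    r2 = best_response_offset \<rho> a mt + best_response_slope \<rho> * r3 \<and>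
    r3 = best_response_offset \<rho> a mt + best_response_slope \<rho> * r2"
  unfolding is_funds_NE_def util_fund2[OF assms] util_fund3[OF assms] fund_best_response_iff[OF assms] ..

lemma symmetric_affine_system_iff:
  fixes c s x y :: "'a::field"
  assumes "s \<noteq> 1" and "s \<noteq> -1"
  shows "(x = c + s * y \<and> y = c + s * x) \<longleftrightarrow> (x = c / (1 - s) \<and> y = c / (1 - s))"
proof -
  have "1 - s \<noteq> 0" and "1 + s \<noteq> 0"
    using assms by (simp_all add: add_eq_0_iff)
  have fixed: "x = c + s * x \<longleftrightarrow> x = c / (1 - s)" for x
    using \<open>1 - s \<noteq> 0\<close> by (simp add: eq_divide_eq algebra_simps)
  have "x = c + s * y \<and> y = c + s * x \<longleftrightarrow> x = y \<and> x = c + s * x"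
  proof
    assume sys: "x = c + s * y \<and> y = c + s * x"
    hence "(1 + s) * (x - y) = 0"
      by algebra
    with \<open>1 + s \<noteq> 0\<close> have "x = y"
      by simp
    with sys show "x = y \<and> x = c + s * x"
      by simp
  qed auto
  thus ?thesis
    unfolding fixed by auto
qed

lemma abs_best_response_slope_less_1:
  assumes "\<rho>\<^sup>2 < 1"
  shows "\<bar>best_response_slope \<rho>\<bar> < 1"
proof -
  have "\<bar>\<rho>\<bar> \<le> 1"
    using assms by (simp add: abs_square_less_1 less_imp_le)
  moreover have "0 \<le> 2 - \<rho>\<^sup>2"
    using assms by simp
  ultimately
  have "\<bar>\<rho> * (2 - \<rho>\<^sup>2)\<bar> \<le> 1 * 2"
    unfolding abs_mult by (intro mult_mono) auto
  also have "\<dots> < 4 * (3 - \<rho>\<^sup>2)"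
    using assms by simp
  finally show ?thesis
    using assms by (simp add: best_response_slope_def abs_divide)
qed

lemma nuC_etaC_eq:
  assumes "\<rho>\<^sup>2 < 1"
  shows "nuC \<rho> = 2 / (4 - \<rho>\<^sup>2)" and "etaC \<rho> = \<rho> / (4 - \<rho>\<^sup>2)"
proof -
  have "\<bar>\<rho>\<bar> < 1"
    using assms by (simp add: abs_square_less_1)
  hence "2 - \<rho> \<noteq> 0" and "2 + \<rho> \<noteq> 0"
    by auto
  moreover have "4 - \<rho>\<^sup>2 = (2 - \<rho>) * (2 + \<rho>)"
    by (simp add: power2_eq_square algebra_simps)
  ultimately show "nuC \<rho> = 2 / (4 - \<rho>\<^sup>2)" and "etaC \<rho> = \<rho> / (4 - \<rho>\<^sup>2)"
    by (simp_all add: nuC_def etaC_def divide_simps)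
qed

lemma best_response_coefficients_eq_paper:
  assumes "\<rho>\<^sup>2 < 1"
  defines "\<nu> \<equiv> nuC \<rho>" and "\<eta> \<equiv> etaC \<rho>"
  shows "(a * \<nu> - mt / (2 + \<rho>) * (1 - \<nu>)) / (\<nu> * (2 - \<nu>)) = best_response_offset \<rho> a mt"
    and "\<eta> * (1 - \<nu>) / (\<nu> * (2 - \<nu>)) = best_response_slope \<rho>"
    and "best_response_offset \<rho> a mt / (1 - best_response_slope \<rho>)
         = (a * \<nu> - mt * (1 - \<nu>) * (\<nu> - \<eta>)) / (\<nu> + (1 - \<nu>) * (\<nu> - \<eta>))"
proof -
  define N where "N = 2 * a * (4 - \<rho>\<^sup>2) - (2 - \<rho>) * (2 - \<rho>\<^sup>2) * mt"
  define c2 where "c2 = 4 * (3 - \<rho>\<^sup>2) - \<rho> * (2 - \<rho>\<^sup>2)"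
  have "\<bar>\<rho>\<bar> < 1"
    using assms(1) by (simp add: abs_square_less_1)
  hence "2 + \<rho> \<noteq> 0"
    by auto
  have "4 - \<rho>\<^sup>2 \<noteq> 0" and "3 - \<rho>\<^sup>2 \<noteq> 0"
    using assms(1) by auto
  have "c2 \<noteq> 0"
    using abs_best_response_slope_less_1[OF assms(1)] \<open>3 - \<rho>\<^sup>2 \<noteq> 0\<close>
    by (auto simp: best_response_slope_def c2_def)
  note nz = \<open>2 + \<rho> \<noteq> 0\<close> \<open>4 - \<rho>\<^sup>2 \<noteq> 0\<close> \<open>3 - \<rho>\<^sup>2 \<noteq> 0\<close> \<open>c2 \<noteq> 0\<close>
  show "(a * \<nu> - mt / (2 + \<rho>) * (1 - \<nu>)) / (\<nu> * (2 - \<nu>)) = best_response_offset \<rho> a mt"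
    unfolding \<nu>_def nuC_etaC_eq[OF assms(1)] best_response_offset_def using nz
    by (simp add: divide_simps) (simp add: power2_eq_square algebra_simps)
  show "\<eta> * (1 - \<nu>) / (\<nu> * (2 - \<nu>)) = best_response_slope \<rho>"
    unfolding \<nu>_def \<eta>_def nuC_etaC_eq[OF assms(1)] best_response_slope_def using nz
    by (simp add: divide_simps)
  have "a * \<nu> - mt * (1 - \<nu>) * (\<nu> - \<eta>) = N / (4 - \<rho>\<^sup>2)\<^sup>2"
    and "\<nu> + (1 - \<nu>) * (\<nu> - \<eta>) = c2 / (4 - \<rho>\<^sup>2)\<^sup>2"
    unfolding \<nu>_def \<eta>_def nuC_etaC_eq[OF assms(1)] N_def c2_def using nz
    by (simp_all add: divide_simps) (simp_all add: power2_eq_square algebra_simps)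
  moreover have "best_response_offset \<rho> a mt = N / (4 * (3 - \<rho>\<^sup>2))"
    and "1 - best_response_slope \<rho> = c2 / (4 * (3 - \<rho>\<^sup>2))"
    unfolding best_response_offset_def best_response_slope_def N_def c2_def using nz
    by (simp_all add: divide_simps)
  ultimately show "best_response_offset \<rho> a mt / (1 - best_response_slope \<rho>)
         = (a * \<nu> - mt * (1 - \<nu>) * (\<nu> - \<eta>)) / (\<nu> + (1 - \<nu>) * (\<nu> - \<eta>))"
    using nz by simp
qed

theorem mainTheorem13:
  fixes m a \<rho> mt :: real
  assumes "-1 < \<rho>" and "\<rho> < 1"
  shows "let \<nu> = nuC \<rho>; \<eta> = etaC \<rho>; \<alpha> = mt / (2 + \<rho>);
             c = (a * \<nu> - \<alpha> * (1 - \<nu>)) / (\<nu> * (2 - \<nu>));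
             s = \<eta> * (1 - \<nu>) / (\<nu> * (2 - \<nu>));
             x = c / (1 - s)
         in x = (a * \<nu> - mt * (1 - \<nu>) * (\<nu> - \<eta>)) / (\<nu> + (1 - \<nu>) * (\<nu> - \<eta>))
            \<and> {(r2, r3). is_funds_NE m a \<rho> mt r2 r3} = {(x, x)}"
proof -
  have \<rho>: "\<rho>\<^sup>2 < 1"
    using assms by (simp add: abs_square_less_1)
  have "best_response_slope \<rho> \<noteq> 1" and "best_response_slope \<rho> \<noteq> -1"
    using abs_best_response_slope_less_1[OF \<rho>] by auto
  hence "{(r2, r3). is_funds_NE m a \<rho> mt r2 r3} =
         {(best_response_offset \<rho> a mt / (1 - best_response_slope \<rho>),
           best_response_offset \<rho> a mt / (1 - best_response_slope \<rho>))}"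
    by (auto simp: is_funds_NE_iff[OF \<rho>] symmetric_affine_system_iff)
  thus ?thesis
    unfolding Let_def best_response_coefficients_eq_paper[OF \<rho>] by simp
qed

end
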